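(* Let $K$ be a field of characteristic $0$, let $L=\mathcal{L}(x,y)$ be the free Lie algebra over $K$ freely generated by $x,y$, let $\delta$ be the derivation of $L$ with $\delta(x)=0$, $\delta(y)=x$, and $L^\delta=\ker\delta$. Every element of $L^\delta$ of degree at most $7$ belongs to the Lie subalgebra of $L$ generated by $x$, $[y,x]$ and $[[y,x,y],[y,x,x]]$.
   Context: Brackets are left-normed: $[a_1,a_2,\ldots,a_n]=[[\ldots[a_1,a_2],\ldots],a_n]$. *)

theory Defs
  imports Main
begin

datatype gen = GX | GY

text \<open>Elements of the free associative algebra K<x,y>, as coefficient functions
  on words (noncommutative polynomials). The free Lie algebra L(x,y) is realised as
  the Lie subalgebra of K<x,y> (with commutator bracket) generated by x and y.\<close>
type_synonym 'k ncpoly = "gen list \<Rightarrow> 'k"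

definition nc_gen :: "gen \<Rightarrow> 'k::field ncpoly" where
  "nc_gen g = (\<lambda>w. if w = [g] then 1 else 0)"

definition nc_add :: "'k::field ncpoly \<Rightarrow> 'k ncpoly \<Rightarrow> 'k ncpoly" where
  "nc_add p q = (\<lambda>w. p w + q w)"

definition nc_smult :: "'k::field \<Rightarrow> 'k ncpoly \<Rightarrow> 'k ncpoly" where
  "nc_smult c p = (\<lambda>w. c * p w)"

definition nc_mult :: "'k::field ncpoly \<Rightarrow> 'k ncpoly \<Rightarrow> 'k ncpoly" where
  "nc_mult p q = (\<lambda>w. \<Sum>i\<le>length w. p (take i w) * q (drop i w))"

definition nc_bracket :: "'k::field ncpoly \<Rightarrow> 'k ncpoly \<Rightarrow> 'k ncpoly" where
  "nc_bracket p q = (\<lambda>w. nc_mult p q w - nc_mult q p w)"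

inductive_set lie_gen :: "'k::field ncpoly set \<Rightarrow> 'k ncpoly set" for S where
  base: "p \<in> S \<Longrightarrow> p \<in> lie_gen S"
| add: "p \<in> lie_gen S \<Longrightarrow> q \<in> lie_gen S \<Longrightarrow> nc_add p q \<in> lie_gen S"
| smult: "p \<in> lie_gen S \<Longrightarrow> nc_smult c p \<in> lie_gen S"
| bracket: "p \<in> lie_gen S \<Longrightarrow> q \<in> lie_gen S \<Longrightarrow> nc_bracket p q \<in> lie_gen S"

definition free_lie :: "'k::field ncpoly set" where
  "free_lie = lie_gen {nc_gen GX, nc_gen GY}"

text \<open>The derivation delta with delta(x)=0, delta(y)=x (extended to K<x,y>,
  restricting to the unique such derivation of L): a word maps to the sum of the
  words obtained by replacing one occurrence of y by x.\<close>
definition delta :: "'k::field ncpoly \<Rightarrow> 'k ncpoly" where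
  "delta p = (\<lambda>w. \<Sum>i\<in>{i. i < length w \<and> w ! i = GX}. p (w[i := GY]))"

definition deg_le :: "nat \<Rightarrow> 'k::field ncpoly \<Rightarrow> bool" where
  "deg_le d p \<longleftrightarrow> (\<forall>w. d < length w \<longrightarrow> p w = 0)"

end

theory Submission
  imports Defs
begin

(* Since delta preserves the length of words, it suffices to treat each homogeneous component q of
   degree n <= 7 of a kernel element.  Such a q is a linear combination of left-normed brackets
   [x, y, g3, ..., gn] of the generators.  For each n we exhibit an integer N \<noteq> 0, words w_i with
   elements G_i of the subalgebra A generated by x, [y,x] and [[y,x,y],[y,x,x]], and words v_j
   with polynomials M_j such that the linear identity
     N q = \<Sum>i q(w_i) G_i + \<Sum>j (delta q)(v_j) M_j
   holds for every such bracket, hence for every q of degree n.  When delta q = 0 it exhibits q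
   as an element of A; characteristic 0 is used to divide by N.  The identities are checked by
   evaluation on polynomials with integer coefficients stored as tries. *)

section \<open>Noncommutative polynomials\<close>

lemma nc_mult_Nil: "nc_mult p q [] = p [] * q []"
  by (simp add: nc_mult_def)

lemma nc_mult_Cons: "nc_mult p q (g # w) = p [] * q (g # w) + nc_mult (\<lambda>v. p (g # v)) q w"
  unfolding nc_mult_def by (simp add: sum.atMost_Suc_shift del: sum.atMost_Suc)

lemma nc_mult_add_left: "nc_mult (\<lambda>v. p v + p' v) q w = nc_mult p q w + nc_mult p' q w"
  unfolding nc_mult_def by (simp add: distrib_right sum.distrib)

lemma nc_mult_add_right: "nc_mult p (\<lambda>v. q v + q' v) w = nc_mult p q w + nc_mult p q' w"
  unfolding nc_mult_def by (simp add: distrib_left sum.distrib)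

lemma nc_mult_diff_left: "nc_mult (\<lambda>v. p v - p' v) q w = nc_mult p q w - nc_mult p' q w"
  unfolding nc_mult_def by (simp add: left_diff_distrib sum_subtractf)

lemma nc_mult_diff_right: "nc_mult p (\<lambda>v. q v - q' v) w = nc_mult p q w - nc_mult p q' w"
  unfolding nc_mult_def by (simp add: right_diff_distrib sum_subtractf)

lemma nc_mult_smult_left: "nc_mult (\<lambda>v. c * p v) q w = c * nc_mult p q w"
  unfolding nc_mult_def by (simp add: sum_distrib_left mult.assoc)

lemma nc_mult_smult_right: "nc_mult p (\<lambda>v. c * q v) w = c * nc_mult p q w"
  unfolding nc_mult_def by (simp add: sum_distrib_left algebra_simps)

lemma nc_mult_zero_left: "nc_mult (\<lambda>v. 0) q w = 0"
  by (simp add: nc_mult_def)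

lemma nc_mult_zero_right: "nc_mult p (\<lambda>v. 0) w = 0"
  by (simp add: nc_mult_def)

lemma nc_mult_assoc: "nc_mult (nc_mult p q) r = nc_mult p (nc_mult q r)"
proof
  fix w
  show "nc_mult (nc_mult p q) r w = nc_mult p (nc_mult q r) w"
  proof (induction w arbitrary: p)
    case Nil
    show ?case by (simp add: nc_mult_Nil)
  next
    case (Cons g w)
    have "(\<lambda>v. nc_mult p q (g # v)) = (\<lambda>v. p [] * q (g # v) + nc_mult (\<lambda>v. p (g # v)) q v)"
      by (simp add: nc_mult_Cons)
    then show ?case
      by (simp add: nc_mult_Cons nc_mult_Nil nc_mult_add_left nc_mult_smult_left Cons.IH
          algebra_simps)
  qed
qed

lemma nc_bracket_jacobi:
  "nc_bracket p (nc_bracket q r) =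
     (\<lambda>w. nc_bracket (nc_bracket p q) r w - nc_bracket (nc_bracket p r) q w)"
  unfolding nc_bracket_def
  by (simp add: nc_mult_diff_left nc_mult_diff_right nc_mult_assoc algebra_simps)

lemma nc_bracket_add_left: "nc_bracket (nc_add p q) r = nc_add (nc_bracket p r) (nc_bracket q r)"
  unfolding nc_bracket_def nc_add_def by (simp add: nc_mult_add_left nc_mult_add_right algebra_simps)

lemma nc_bracket_add_right: "nc_bracket p (nc_add q r) = nc_add (nc_bracket p q) (nc_bracket p r)"
  unfolding nc_bracket_def nc_add_def by (simp add: nc_mult_add_left nc_mult_add_right algebra_simps)

lemma nc_bracket_smult_left: "nc_bracket (nc_smult c p) q = nc_smult c (nc_bracket p q)"
  unfolding nc_bracket_def nc_smult_def
  by (simp add: nc_mult_smult_left nc_mult_smult_right right_diff_distrib)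

lemma nc_bracket_smult_right: "nc_bracket p (nc_smult c q) = nc_smult c (nc_bracket p q)"
  unfolding nc_bracket_def nc_smult_def
  by (simp add: nc_mult_smult_left nc_mult_smult_right right_diff_distrib)

lemma nc_bracket_zero_left: "nc_bracket (\<lambda>w. 0) q = (\<lambda>w. 0)"
  by (simp add: nc_bracket_def nc_mult_zero_left nc_mult_zero_right)

lemma nc_bracket_zero_right: "nc_bracket p (\<lambda>w. 0) = (\<lambda>w. 0)"
  by (simp add: nc_bracket_def nc_mult_zero_left nc_mult_zero_right)

lemma nc_bracket_self: "nc_bracket p p = (\<lambda>w. 0)"
  by (simp add: nc_bracket_def)

lemma nc_bracket_anticomm: "nc_bracket q p = nc_smult (-1) (nc_bracket p q)"
  by (simp add: nc_bracket_def nc_smult_def)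

lemma delta_alt: "delta p w = (\<Sum>i<length w. if w ! i = GX then p (w[i := GY]) else 0)"
proof -
  have "{i. i < length w \<and> w ! i = GX} = {i \<in> {..<length w}. w ! i = GX}" by auto
  then show ?thesis
    unfolding delta_def by (simp add: sum.inter_filter[symmetric])
qed

lemma delta_zero: "delta (\<lambda>w. 0) = (\<lambda>w. 0)"
  by (simp add: delta_def)

lemma delta_add: "delta (nc_add p q) = nc_add (delta p) (delta q)"
  by (simp add: delta_def nc_add_def sum.distrib)

lemma delta_smult: "delta (nc_smult c p) = nc_smult c (delta p)"
  by (simp add: delta_def nc_smult_def sum_distrib_left)

inductive_set nc_span :: "'k::field ncpoly set \<Rightarrow> 'k ncpoly set" for S where
  zero: "(\<lambda>w. 0) \<in> nc_span S"
| base: "p \<in> S \<Longrightarrow> p \<in> nc_span S"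
| add: "p \<in> nc_span S \<Longrightarrow> q \<in> nc_span S \<Longrightarrow> nc_add p q \<in> nc_span S"
| smult: "p \<in> nc_span S \<Longrightarrow> nc_smult c p \<in> nc_span S"

lemma nc_span_diff: "p \<in> nc_span S \<Longrightarrow> q \<in> nc_span S \<Longrightarrow> (\<lambda>w. p w - q w) \<in> nc_span S"
  using nc_span.add[OF _ nc_span.smult, of p S q "-1"] by (simp add: nc_add_def nc_smult_def)

lemma nc_span_sum:
  "finite I \<Longrightarrow> (\<And>i. i \<in> I \<Longrightarrow> f i \<in> nc_span S) \<Longrightarrow> (\<lambda>w. \<Sum>i\<in>I. f i w) \<in> nc_span S"
proof (induction I rule: finite_induct)
  case empty
  then show ?case by (simp add: nc_span.zero)
next
  case (insert i I)
  then have "nc_add (f i) (\<lambda>w. \<Sum>i\<in>I. f i w) \<in> nc_span S" by (simp add: nc_span.add)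
  with insert.hyps show ?case by (simp add: nc_add_def)
qed

lemma nc_span_subset: "p \<in> nc_span S \<Longrightarrow> S \<subseteq> nc_span T \<Longrightarrow> p \<in> nc_span T"
  by (induction rule: nc_span.induct) (auto intro: nc_span.intros)

lemma nc_span_bracket:
  assumes "\<And>a b. a \<in> A \<Longrightarrow> b \<in> B \<Longrightarrow> nc_bracket a b \<in> nc_span C"
    and "p \<in> nc_span A" and "q \<in> nc_span B"
  shows "nc_bracket p q \<in> nc_span C"
  using assms(2)
proof (induction rule: nc_span.induct)
  case zero
  then show ?case by (simp add: nc_bracket_zero_left nc_span.zero)
next
  case (base a)
  from assms(3) show ?case
    by (induction rule: nc_span.induct)
      (simp_all add: assms(1) base nc_bracket_zero_right nc_bracket_add_right
        nc_bracket_smult_right nc_span.intros)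
next
  case (add p p')
  then show ?case by (simp add: nc_bracket_add_left nc_span.add)
next
  case (smult p c)
  then show ?case by (simp add: nc_bracket_smult_left nc_span.smult)
qed

lemma lie_gen_zero: "S \<noteq> {} \<Longrightarrow> (\<lambda>w. 0) \<in> lie_gen S"
  using lie_gen.smult[OF lie_gen.base, of _ S 0] by (auto simp: nc_smult_def)

lemma lie_gen_nc_span: "p \<in> nc_span (lie_gen S) \<Longrightarrow> S \<noteq> {} \<Longrightarrow> p \<in> lie_gen S"
  by (induction rule: nc_span.induct) (auto intro: lie_gen_zero lie_gen.add lie_gen.smult)

section \<open>Homogeneous parts and left-normed brackets\<close>

definition homogeneous_part :: "nat \<Rightarrow> 'k::field ncpoly \<Rightarrow> 'k ncpoly" where
  "homogeneous_part n p = (\<lambda>w. if length w = n then p w else 0)"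

lemma nc_mult_homogeneous_part:
  "nc_mult (homogeneous_part i p) (homogeneous_part j q) w =
     (if length w = i + j then p (take i w) * q (drop i w) else 0)"
proof -
  have "nc_mult (homogeneous_part i p) (homogeneous_part j q) w =
      (\<Sum>k\<le>length w. if k = i \<and> length w = i + j then p (take i w) * q (drop i w) else 0)"
    unfolding nc_mult_def homogeneous_part_def by (rule sum.cong) auto
  then show ?thesis by (simp add: sum.delta)
qed

lemma homogeneous_part_bracket:
  "homogeneous_part n (nc_bracket p q) =
     (\<lambda>w. \<Sum>i\<le>n. nc_bracket (homogeneous_part i p) (homogeneous_part (n - i) q) w)"
proof
  fix w :: "gen list"
  show "homogeneous_part n (nc_bracket p q) w =
      (\<Sum>i\<le>n. nc_bracket (homogeneous_part i p) (homogeneous_part (n - i) q) w)"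
  proof (cases "length w = n")
    case True
    have "(\<Sum>i\<le>n. nc_mult (homogeneous_part i p) (homogeneous_part (n - i) q) w) =
        (\<Sum>i\<le>n. p (take i w) * q (drop i w))"
      unfolding nc_mult_homogeneous_part using True by (intro sum.cong) auto
    also have "\<dots> = nc_mult p q w"
      unfolding nc_mult_def True ..
    moreover have "(\<Sum>i\<le>n. nc_mult (homogeneous_part (n - i) q) (homogeneous_part i p) w) =
        (\<Sum>i\<le>n. q (take (n - i) w) * p (drop (n - i) w))"
      unfolding nc_mult_homogeneous_part using True by (intro sum.cong) auto
    moreover have "\<dots> = nc_mult q p w"
      using sum.atLeastAtMost_rev[of "\<lambda>i. q (take i w) * p (drop i w)" 0 n]
      by (simp add: nc_mult_def True atLeast0AtMost)
    ultimately show ?thesis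
      using True by (simp add: nc_bracket_def sum_subtractf homogeneous_part_def)
  next
    case False
    then have "nc_bracket (homogeneous_part i p) (homogeneous_part (n - i) q) w = 0"
      if "i \<le> n" for i
      using that by (simp add: nc_bracket_def nc_mult_homogeneous_part)
    with False show ?thesis by (simp add: homogeneous_part_def)
  qed
qed

lemma delta_homogeneous_part: "delta (homogeneous_part n p) = homogeneous_part n (delta p)"
  by (simp add: delta_alt homogeneous_part_def fun_eq_iff cong: if_cong)

lemma sum_homogeneous_parts:
  assumes "p [] = 0" and "deg_le d p"
  shows "p = (\<lambda>w. \<Sum>n\<in>{1..d}. homogeneous_part n p w)"
proof
  fix w :: "gen list"
  have "(\<Sum>n\<in>{1..d}. homogeneous_part n p w) = (if length w \<in> {1..d} then p w else 0)"
    by (simp add: homogeneous_part_def sum.delta)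
  moreover have "length w \<notin> {1..d} \<Longrightarrow> p w = 0"
    using assms by (cases w) (auto simp: deg_le_def)
  ultimately show "p w = (\<Sum>n\<in>{1..d}. homogeneous_part n p w)" by auto
qed

fun left_bracket :: "gen list \<Rightarrow> 'k::field ncpoly" where
  "left_bracket [] = (\<lambda>w. 0)"
| "left_bracket (g # r) = foldl (\<lambda>p h. nc_bracket p (nc_gen h)) (nc_gen g) r"

lemma foldl_bracket_smult:
  "foldl (\<lambda>p h. nc_bracket p (nc_gen h)) (nc_smult c p) r =
     nc_smult c (foldl (\<lambda>p h. nc_bracket p (nc_gen h)) p r)"
  by (induction r arbitrary: p) (simp_all add: nc_bracket_smult_left)

lemma left_bracket_snoc: "z \<noteq> [] \<Longrightarrow> left_bracket (z @ [h]) = nc_bracket (left_bracket z) (nc_gen h)"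
  by (cases z) simp_all

lemma left_bracket_repeat: "left_bracket (g # g # r) = (\<lambda>w. 0)"
proof -
  have "left_bracket (g # g # r) =
      foldl (\<lambda>p h. nc_bracket p (nc_gen h)) (nc_smult 0 (nc_gen g)) r"
    by (simp add: nc_bracket_self nc_smult_def)
  also have "\<dots> = nc_smult 0 (left_bracket (g # r))"
    by (simp add: foldl_bracket_smult)
  finally show ?thesis by (simp add: nc_smult_def)
qed

lemma left_bracket_swap: "left_bracket (h # g # r) = nc_smult (-1) (left_bracket (g # h # r))"
  by (simp add: nc_bracket_anticomm[of "nc_gen h"] foldl_bracket_smult)

definition bracket_span :: "nat \<Rightarrow> 'k::field ncpoly set" where
  "bracket_span n = nc_span (left_bracket ` {z. length z = n})"

lemma bracket_span_bracket_gen: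
  fixes p :: "'k::field ncpoly"
  assumes "p \<in> bracket_span m"
  shows "nc_bracket p (nc_gen h) \<in> bracket_span (Suc m)"
proof -
  have gen: "nc_bracket (left_bracket z) (nc_gen h :: 'k ncpoly) \<in> bracket_span (Suc m)"
    if "length z = m" for z
  proof (cases "z = []")
    case True
    then show ?thesis by (simp add: nc_bracket_zero_left bracket_span_def nc_span.zero)
  next
    case False
    then show ?thesis
      using that by (auto simp: bracket_span_def left_bracket_snoc[symmetric] intro: nc_span.base)
  qed
  have h: "nc_gen h \<in> nc_span {nc_gen h :: 'k ncpoly}"
    by (rule nc_span.base) simp
  show ?thesis
    unfolding bracket_span_def
    by (rule nc_span_bracket[OF _ assms[unfolded bracket_span_def] h])
      (use gen in \<open>auto simp: bracket_span_def\<close>)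
qed

lemma bracket_left_bracket:
  "nc_bracket (left_bracket z) (left_bracket z' :: 'k::field ncpoly)
     \<in> bracket_span (length z + length z')"
proof (induction z' arbitrary: z rule: rev_induct)
  case Nil
  then show ?case by (simp add: nc_bracket_zero_right bracket_span_def nc_span.zero)
next
  case (snoc h r)
  show ?case
  proof (cases "r = [] \<or> z = []")
    case True
    then show ?thesis
      using bracket_span_bracket_gen[of "left_bracket z" "length z" h]
      by (auto simp: nc_bracket_zero_left bracket_span_def nc_span.intros)
  next
    case False
    then have "nc_bracket (left_bracket z) (left_bracket (r @ [h]) :: 'k ncpoly) =
        (\<lambda>w. nc_bracket (nc_bracket (left_bracket z) (left_bracket r)) (nc_gen h) w -
             nc_bracket (left_bracket (z @ [h])) (left_bracket r) w)"
      by (simp add: left_bracket_snoc nc_bracket_jacobi)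
    moreover have "nc_bracket (nc_bracket (left_bracket z) (left_bracket r :: 'k ncpoly)) (nc_gen h)
        \<in> bracket_span (Suc (length z + length r))"
      by (rule bracket_span_bracket_gen) (rule snoc.IH)
    moreover have "nc_bracket (left_bracket (z @ [h])) (left_bracket r :: 'k ncpoly)
        \<in> bracket_span (length z + length (r @ [h]))"
      using snoc.IH[of "z @ [h]"] by simp
    ultimately show ?thesis by (simp add: bracket_span_def nc_span_diff)
  qed
qed

lemma bracket_span_bracket:
  "p \<in> bracket_span i \<Longrightarrow> q \<in> bracket_span j \<Longrightarrow> nc_bracket p q \<in> bracket_span (i + j)"
  unfolding bracket_span_def
  by (rule nc_span_bracket[OF _ _ _]) (auto simp: bracket_left_bracket[unfolded bracket_span_def])

lemma homogeneous_part_free_lie: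
  fixes p :: "'k::field ncpoly"
  shows "p \<in> free_lie \<Longrightarrow> homogeneous_part n p \<in> bracket_span n"
  unfolding free_lie_def
proof (induction arbitrary: n rule: lie_gen.induct)
  case (base p)
  then obtain g where "p = nc_gen g" by auto
  then have "homogeneous_part n p = (if n = 1 then left_bracket [g] else (\<lambda>w. 0))"
    by (auto simp: homogeneous_part_def nc_gen_def)
  moreover have "(left_bracket [g] :: 'k ncpoly) \<in> bracket_span 1"
    unfolding bracket_span_def by (intro nc_span.base imageI) simp
  ultimately show ?case by (simp add: bracket_span_def nc_span.zero)
next
  case (add p q)
  have "homogeneous_part n (nc_add p q) = nc_add (homogeneous_part n p) (homogeneous_part n q)"
    by (auto simp: homogeneous_part_def nc_add_def)
  with add.IH show ?case by (simp add: bracket_span_def nc_span.add)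
next
  case (smult p c)
  have "homogeneous_part n (nc_smult c p) = nc_smult c (homogeneous_part n p)"
    by (auto simp: homogeneous_part_def nc_smult_def)
  with smult.IH show ?case by (simp add: bracket_span_def nc_span.smult)
next
  case (bracket p q)
  have "nc_bracket (homogeneous_part i p) (homogeneous_part (n - i) q) \<in> bracket_span n"
    if "i \<le> n" for i
    using bracket_span_bracket[OF bracket.IH] that by (metis le_add_diff_inverse)
  then show ?case
    unfolding homogeneous_part_bracket bracket_span_def by (auto intro: nc_span_sum)
qed

lemma free_lie_Nil: "p \<in> free_lie \<Longrightarrow> p [] = 0"
  unfolding free_lie_def
  by (induction rule: lie_gen.induct)
    (auto simp: nc_gen_def nc_add_def nc_smult_def nc_bracket_def nc_mult_Nil)

fun words :: "nat \<Rightarrow> gen list list" where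
  "words 0 = [[]]"
| "words (Suc n) = map ((#) GX) (words n) @ map ((#) GY) (words n)"

lemma set_words: "set (words n) = {w. length w = n}"
proof (induction n)
  case 0
  then show ?case by auto
next
  case (Suc n)
  have "w \<in> set (words (Suc n))" if "length w = Suc n" for w
    using that Suc by (cases w; cases "hd w") auto
  with Suc show ?case by auto
qed

definition xy_words :: "nat \<Rightarrow> gen list list" where
  "xy_words n = (if n = 1 then [[GX], [GY]] else map (\<lambda>r. GX # GY # r) (words (n - 2)))"

lemma bracket_span_xy_words:
  fixes p :: "'k::field ncpoly"
  assumes "1 \<le> n" and "p \<in> bracket_span n"
  shows "p \<in> nc_span (left_bracket ` set (xy_words n))"
proof -
  let ?S = "nc_span (left_bracket ` set (xy_words n)) :: 'k ncpoly set"
  have "left_bracket z \<in> ?S" if "length z = n" for z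
  proof (cases "n = 1")
    case True
    with that obtain g where "z = [g]" by (cases z) auto
    with True show ?thesis by (cases g) (auto simp: xy_words_def intro: nc_span.base)
  next
    case False
    with that assms(1) obtain g h r where z: "z = g # h # r" and r: "length r = n - 2"
      by (cases z; cases "tl z") auto
    have "GX # GY # r \<in> set (xy_words n)"
      using False r by (simp add: xy_words_def set_words)
    then have xy: "left_bracket (GX # GY # r) \<in> ?S"
      by (intro nc_span.base imageI)
    consider "g = h" | "g = GX" "h = GY" | "g = GY" "h = GX"
      by (cases g; cases h) auto
    then show ?thesis
    proof cases
      case 1
      then show ?thesis by (simp only: z left_bracket_repeat nc_span.zero)
    next
      case 2
      then show ?thesis using xy by (simp only: z)
    next
      case 3
      then show ?thesis using nc_span.smult[OF xy] by (simp only: z left_bracket_swap[of GY GX])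
    qed
  qed
  then show ?thesis
    using assms(2) unfolding bracket_span_def by (auto intro: nc_span_subset)
qed

section \<open>Polynomials with integer coefficients as tries\<close>

(* T c tx ty has coefficient c at the empty word; tx and ty hold the coefficients of the words
   beginning with x and with y respectively. *)
datatype trie = E | T int trie trie

fun trie_lookup :: "trie \<Rightarrow> gen list \<Rightarrow> int" where
  "trie_lookup E w = 0"
| "trie_lookup (T c tx ty) w =
     (case w of [] \<Rightarrow> c | g # v \<Rightarrow> trie_lookup (if g = GX then tx else ty) v)"

definition trie_poly :: "trie \<Rightarrow> 'k::field ncpoly" where
  "trie_poly t = (\<lambda>w. of_int (trie_lookup t w))"

fun trie_add :: "trie \<Rightarrow> trie \<Rightarrow> trie" where
  "trie_add E t = t"
| "trie_add t E = t"
| "trie_add (T c tx ty) (T d sx sy) = T (c + d) (trie_add tx sx) (trie_add ty sy)"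

fun trie_smult :: "int \<Rightarrow> trie \<Rightarrow> trie" where
  "trie_smult c E = E"
| "trie_smult c (T d tx ty) = (if c = 0 then E else T (c * d) (trie_smult c tx) (trie_smult c ty))"

fun trie_mult :: "trie \<Rightarrow> trie \<Rightarrow> trie" where
  "trie_mult E t = E"
| "trie_mult (T c tx ty) t = trie_add (trie_smult c t) (T 0 (trie_mult tx t) (trie_mult ty t))"

definition trie_bracket :: "trie \<Rightarrow> trie \<Rightarrow> trie" where
  "trie_bracket s t = trie_add (trie_mult s t) (trie_smult (-1) (trie_mult t s))"

fun trie_delta :: "trie \<Rightarrow> trie" where
  "trie_delta E = E"
| "trie_delta (T c tx ty) = T 0 (trie_add ty (trie_delta tx)) (trie_delta ty)"

definition trie_gen :: "gen \<Rightarrow> trie" where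
  "trie_gen g = (if g = GX then T 0 (T 1 E E) E else T 0 E (T 1 E E))"

fun trie_is_zero :: "trie \<Rightarrow> bool" where
  "trie_is_zero E = True"
| "trie_is_zero (T c tx ty) \<longleftrightarrow> c = 0 \<and> trie_is_zero tx \<and> trie_is_zero ty"

lemma trie_lookup_add [simp]: "trie_lookup (trie_add s t) w = trie_lookup s w + trie_lookup t w"
  by (induction s t arbitrary: w rule: trie_add.induct) (auto split: list.split)

lemma trie_lookup_smult [simp]: "trie_lookup (trie_smult c t) w = c * trie_lookup t w"
  by (induction t arbitrary: w) (auto split: list.split)

lemma trie_lookup_mult:
  "trie_lookup (trie_mult s t) w = (\<Sum>i\<le>length w. trie_lookup s (take i w) * trie_lookup t (drop i w))"
proof (induction s arbitrary: w)
  case E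
  then show ?case by simp
next
  case (T c tx ty)
  then show ?case
    by (cases w) (simp_all add: sum.atMost_Suc_shift del: sum.atMost_Suc)
qed

lemma trie_lookup_delta:
  "trie_lookup (trie_delta t) w = (\<Sum>i<length w. if w ! i = GX then trie_lookup t (w[i := GY]) else 0)"
proof (induction t arbitrary: w)
  case E
  then show ?case by (simp cong: if_cong)
next
  case (T c tx ty)
  show ?case
  proof (cases w)
    case Nil
    then show ?thesis by simp
  next
    case (Cons g v)
    then show ?thesis
      using T.IH[of v]
      by (cases g) (simp_all add: sum.lessThan_Suc_shift del: sum.lessThan_Suc cong: if_cong)
  qed
qed

lemma trie_lookup_is_zero: "trie_is_zero t \<Longrightarrow> trie_lookup t w = 0"
  by (induction t arbitrary: w) (auto split: list.split)

lemma trie_poly_add: "trie_poly (trie_add s t) = nc_add (trie_poly s) (trie_poly t)"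
  by (simp add: trie_poly_def nc_add_def)

lemma trie_poly_smult: "trie_poly (trie_smult c t) = nc_smult (of_int c) (trie_poly t)"
  by (simp add: trie_poly_def nc_smult_def)

lemma trie_poly_bracket: "trie_poly (trie_bracket s t) = nc_bracket (trie_poly s) (trie_poly t)"
  by (simp add: trie_poly_def trie_bracket_def nc_bracket_def nc_mult_def trie_lookup_mult)

lemma trie_poly_delta: "trie_poly (trie_delta t) = delta (trie_poly t)"
  unfolding trie_poly_def
  by (rule ext) (simp add: delta_alt trie_lookup_delta of_int_sum if_distrib cong: if_cong)

lemma trie_poly_gen: "trie_poly (trie_gen g) = nc_gen g"
proof -
  have "h \<noteq> GX \<longleftrightarrow> h = GY" for h by (cases h) simp_all
  then show ?thesis
    by (cases g) (auto simp: trie_poly_def trie_gen_def nc_gen_def fun_eq_iff split: list.split)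
qed

fun left_bracket_trie :: "gen list \<Rightarrow> trie" where
  "left_bracket_trie [] = E"
| "left_bracket_trie (g # r) = foldl (\<lambda>t h. trie_bracket t (trie_gen h)) (trie_gen g) r"

lemma trie_poly_left_bracket_trie:
  "trie_poly (left_bracket_trie z) = (left_bracket z :: 'k::field ncpoly)"
proof -
  have "trie_poly (foldl (\<lambda>t h. trie_bracket t (trie_gen h)) t r) =
      (foldl (\<lambda>p h. nc_bracket p (nc_gen h)) (trie_poly t) r :: 'k ncpoly)" for t r
    by (induction r arbitrary: t) (simp_all add: trie_poly_bracket trie_poly_gen)
  then show ?thesis
    by (cases z) (simp_all add: trie_poly_gen trie_poly_def[of E])
qed

section \<open>Certificates\<close>

definition kernel_gens :: "'k::field ncpoly set" where
  "kernel_gens =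
     {nc_gen GX,
      nc_bracket (nc_gen GY) (nc_gen GX),
      nc_bracket (nc_bracket (nc_bracket (nc_gen GY) (nc_gen GX)) (nc_gen GY))
                 (nc_bracket (nc_bracket (nc_gen GY) (nc_gen GX)) (nc_gen GX))}"

datatype kgen = KX | KU | KW

fun kgen_trie :: "kgen \<Rightarrow> trie" where
  "kgen_trie KX = trie_gen GX"
| "kgen_trie KU = trie_bracket (trie_gen GY) (trie_gen GX)"
| "kgen_trie KW =
     trie_bracket (trie_bracket (trie_bracket (trie_gen GY) (trie_gen GX)) (trie_gen GY))
                  (trie_bracket (trie_bracket (trie_gen GY) (trie_gen GX)) (trie_gen GX))"

fun kbracket_trie :: "kgen list \<Rightarrow> trie" where
  "kbracket_trie [] = E"
| "kbracket_trie (a # s) = foldl (\<lambda>t b. trie_bracket t (kgen_trie b)) (kgen_trie a) s"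

definition kcomb_trie :: "(int \<times> kgen list) list \<Rightarrow> trie" where
  "kcomb_trie cs = foldr (\<lambda>(c, s). trie_add (trie_smult c (kbracket_trie s))) cs E"

lemma trie_poly_kcomb_trie:
  "(trie_poly (kcomb_trie cs) :: 'k::field ncpoly) \<in> lie_gen kernel_gens"
proof -
  have gens: "(trie_poly (kgen_trie a) :: 'k ncpoly) \<in> lie_gen kernel_gens" for a
    by (cases a) (simp_all add: trie_poly_bracket trie_poly_gen kernel_gens_def lie_gen.base)
  have "(trie_poly (foldl (\<lambda>t b. trie_bracket t (kgen_trie b)) t s) :: 'k ncpoly)
      \<in> lie_gen kernel_gens"
    if "(trie_poly t :: 'k ncpoly) \<in> lie_gen kernel_gens" for t s
    using that by (induction s arbitrary: t) (simp_all add: trie_poly_bracket gens lie_gen.bracket)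
  moreover have zero: "(trie_poly E :: 'k ncpoly) \<in> lie_gen kernel_gens"
    using lie_gen_zero[of kernel_gens] by (simp add: trie_poly_def kernel_gens_def)
  ultimately have "(trie_poly (kbracket_trie s) :: 'k ncpoly) \<in> lie_gen kernel_gens" for s
    by (cases s) (simp_all add: gens)
  then show ?thesis
    unfolding kcomb_trie_def
    by (induction cs)
      (auto simp: trie_poly_add trie_poly_smult zero intro!: lie_gen.add lie_gen.smult)
qed

definition coeff_comb :: "(gen list \<times> 'k::field ncpoly) list \<Rightarrow> 'k ncpoly \<Rightarrow> 'k ncpoly" where
  "coeff_comb ps q = (\<lambda>v. \<Sum>(w, G)\<leftarrow>ps. q w * G v)"

lemma coeff_comb_zero: "coeff_comb ps (\<lambda>w. 0) = (\<lambda>w. 0)"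
  unfolding coeff_comb_def fun_eq_iff by (induction ps) auto

lemma coeff_comb_add: "coeff_comb ps (nc_add p q) = nc_add (coeff_comb ps p) (coeff_comb ps q)"
  unfolding coeff_comb_def nc_add_def fun_eq_iff by (induction ps) (auto simp: algebra_simps)

lemma coeff_comb_smult: "coeff_comb ps (nc_smult c p) = nc_smult c (coeff_comb ps p)"
  unfolding coeff_comb_def nc_smult_def fun_eq_iff by (induction ps) (auto simp: algebra_simps)

lemma coeff_comb_in_span:
  "(\<And>w G. (w, G) \<in> set ps \<Longrightarrow> G \<in> S) \<Longrightarrow> coeff_comb ps q \<in> nc_span S"
proof (induction ps)
  case Nil
  then show ?case by (simp add: coeff_comb_def nc_span.zero)
next
  case (Cons wG ps)
  obtain w G where wG: "wG = (w, G)" by fastforce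
  have "G \<in> S" and "coeff_comb ps q \<in> nc_span S"
    using Cons wG by auto
  then have "nc_add (nc_smult (q w) G) (coeff_comb ps q) \<in> nc_span S"
    by (blast intro: nc_span.add nc_span.smult nc_span.base)
  with wG show ?case by (simp add: coeff_comb_def nc_add_def nc_smult_def)
qed

definition trie_comb :: "(gen list \<times> trie) list \<Rightarrow> trie \<Rightarrow> trie" where
  "trie_comb ps t = foldr (\<lambda>(w, G). trie_add (trie_smult (trie_lookup t w) G)) ps E"

lemma trie_poly_trie_comb:
  "trie_poly (trie_comb ps t) = coeff_comb (map (\<lambda>(w, G). (w, trie_poly G)) ps) (trie_poly t)"
  unfolding fun_eq_iff by (induction ps) (auto simp: trie_comb_def coeff_comb_def trie_poly_def)

(* (N, P, M) lists N, the pairs (w_i, G_i) and the pairs (v_j, M_j) of the identity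
   N q = \<Sum>i q(w_i) G_i + \<Sum>j (delta q)(v_j) M_j, each G_i as an integer combination of
   left-normed brackets of KX, KU and KW. *)
type_synonym certificate =
  "int \<times> (gen list \<times> (int \<times> kgen list) list) list \<times> (gen list \<times> trie) list"

(* t and its image dt under delta are separate arguments so that code_simp evaluates each once. *)
definition trie_identity ::
    "int \<Rightarrow> (gen list \<times> trie) list \<Rightarrow> (gen list \<times> trie) list \<Rightarrow> trie \<Rightarrow> trie \<Rightarrow> bool" where
  "trie_identity N P M t dt \<longleftrightarrow>
     trie_is_zero
       (trie_add (trie_smult N t) (trie_smult (-1) (trie_add (trie_comb P t) (trie_comb M dt))))"

fun cert_valid :: "nat \<Rightarrow> certificate \<Rightarrow> bool" where
  "cert_valid n (N, P, M) \<longleftrightarrow>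
     N \<noteq> 0 \<and>
     list_all (\<lambda>z. trie_identity N (map (\<lambda>(w, cs). (w, kcomb_trie cs)) P) M
                      (left_bracket_trie z) (trie_delta (left_bracket_trie z)))
       (xy_words n)"

lemma cert_valid_identity:
  assumes "cert_valid n (N, P, M)" and "z \<in> set (xy_words n)"
  shows "nc_smult (of_int N) (left_bracket z :: 'k::field ncpoly) =
     nc_add (coeff_comb (map (\<lambda>(w, cs). (w, trie_poly (kcomb_trie cs))) P) (left_bracket z))
            (coeff_comb (map (\<lambda>(w, G). (w, trie_poly G)) M) (delta (left_bracket z)))"
proof -
  define t where "t = left_bracket_trie z"
  define R where "R = trie_add (trie_comb (map (\<lambda>(w, cs). (w, kcomb_trie cs)) P) t)
                        (trie_comb M (trie_delta t))"
  have "trie_is_zero (trie_add (trie_smult N t) (trie_smult (-1) R))"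
    using assms by (auto simp: t_def R_def trie_identity_def list_all_iff)
  then have "N * trie_lookup t v = trie_lookup R v" for v
    using trie_lookup_is_zero by fastforce
  then have "nc_smult (of_int N) (trie_poly t) = (trie_poly R :: 'k ncpoly)"
    by (simp add: trie_poly_def nc_smult_def fun_eq_iff flip: of_int_mult)
  then show ?thesis
    by (simp add: R_def t_def trie_poly_add trie_poly_trie_comb trie_poly_delta
        trie_poly_left_bracket_trie split_def comp_def)
qed

lemma coeff_comb_identity_span:
  assumes "\<And>s. s \<in> S \<Longrightarrow> nc_smult c s = nc_add (coeff_comb P s) (coeff_comb M (delta s))"
    and "q \<in> nc_span S"
  shows "nc_smult c q = nc_add (coeff_comb P q) (coeff_comb M (delta q))"
  using assms(2)
proof (induction rule: nc_span.induct)
  case zero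
  then show ?case by (simp add: delta_zero coeff_comb_zero nc_add_def nc_smult_def)
next
  case (base s)
  then show ?case by (rule assms(1))
next
  case (add p q)
  then show ?case
    unfolding coeff_comb_add delta_add by (simp add: nc_add_def nc_smult_def fun_eq_iff algebra_simps)
next
  case (smult p a)
  then show ?case
    unfolding coeff_comb_smult delta_smult
    by (simp add: nc_add_def nc_smult_def fun_eq_iff algebra_simps)
qed

lemma cert_valid_sound:
  fixes q :: "'k::field_char_0 ncpoly"
  assumes "cert_valid n C"
    and "q \<in> nc_span (left_bracket ` set (xy_words n))"
    and "delta q = (\<lambda>w. 0)"
  shows "q \<in> lie_gen kernel_gens"
proof -
  obtain N P M where C: "C = (N, P, M)" by (cases C)
  define P' :: "(gen list \<times> 'k ncpoly) list"
    where "P' = map (\<lambda>(w, cs). (w, trie_poly (kcomb_trie cs))) P"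
  have N: "N \<noteq> 0" using assms(1) C by simp
  have "nc_smult (of_int N) q =
      nc_add (coeff_comb P' q) (coeff_comb (map (\<lambda>(w, G). (w, trie_poly G)) M) (delta q))"
    unfolding P'_def
    by (rule coeff_comb_identity_span[OF _ assms(2)]) (use cert_valid_identity assms(1) C in blast)
  then have "q = nc_smult (1 / of_int N) (coeff_comb P' q)"
    using N by (simp add: assms(3) coeff_comb_zero nc_add_def nc_smult_def fun_eq_iff field_simps)
  moreover have "coeff_comb P' q \<in> nc_span (lie_gen kernel_gens)"
    by (rule coeff_comb_in_span) (auto simp: P'_def trie_poly_kcomb_trie)
  ultimately show ?thesis
    using lie_gen_nc_span nc_span.smult by (metis empty_iff insertI1 kernel_gens_def)
qed

definition cert1 :: certificate where
  "cert1 =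
    (1,
     [([GX], [(1, [KX])])],
     [([GX],
       T 0 E (T 1 E E))])"

definition cert2 :: certificate where
  "cert2 =
    (1,
     [([GX, GY], [((-1), [KU])])],
     [])"

definition cert3 :: certificate where
  "cert3 =
    (1,
     [([GX, GX, GY], [((-1), [KX, KU])])],
     [([GX, GX, GY],
       T 0 (T 0 E (T 0 E (T (-1) E E))) (T 0 (T 0 E (T 2 E E)) (T 0 (T (-1) E E) E)))])"

definition cert4 :: certificate where
  "cert4 =
    (2,
     [([GX, GX, GX, GY], [(2, [KX, KU, KX])])],
     [([GX, GX, GX, GY],
       T 0 (T 0 (T 0 E (T 0 E (T (-2) E E))) (T 0 (T 0 E (T 4 E E)) E)) (T 0 (T 0 E (T 0 (T (-4) E E) E)) (T 0 (T 0 (T 2 E E) E) E))),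
      ([GX, GX, GY, GY],
       T 0 (T 0 E (T 0 E (T 0 E (T (-1) E E)))) (T 0 (T 0 E (T 0 E (T 3 E E))) (T 0 (T 0 E (T (-3) E E)) (T 0 (T 1 E E) E))))])"

definition cert5 :: certificate where
  "cert5 =
    (6,
     [([GX, GX, GX, GX, GY], [((-6), [KX, KU, KX, KX])]),
      ([GX, GX, GY, GX, GY], [(6, [KX, KU, KU])])],
     [([GX, GX, GX, GX, GY],
       T 0 (T 0 (T 0 (T 0 E (T 0 E (T (-6) E E))) (T 0 E (T 0 (T 18 E E) E))) (T 0 (T 0 (T 0 E (T 36 E E)) (T 0 (T (-72) E E) E)) (T 0 (T 0 (T 18 E E) E) E))) (T 0 (T 0 (T 0 (T 0 E (T (-24) E E)) (T 0 (T 36 E E) E)) E) (T 0 (T 0 (T 0 (T (-6) E E) E) E) E))),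
      ([GX, GX, GX, GY, GY],
       T 0 (T 0 (T 0 E (T 0 E (T 0 E (T (-3) E E)))) (T 0 (T 0 E (T 0 E (T 21 E E))) (T 0 (T 0 E (T (-45) E E)) (T 0 (T 30 E E) E)))) (T 0 (T 0 (T 0 E (T 0 E (T (-12) E E))) (T 0 (T 0 E (T 48 E E)) (T 0 (T (-45) E E) E))) (T 0 (T 0 (T 0 E (T (-12) E E)) (T 0 (T 21 E E) E)) (T 0 (T 0 (T (-3) E E) E) E)))),
      ([GX, GX, GY, GX, GY],
       T 0 (T 0 E (T 0 (T 0 E (T 0 E (T 6 E E))) (T 0 (T 0 E (T (-18) E E)) (T 0 (T 12 E E) E)))) (T 0 (T 0 (T 0 E (T 0 E (T (-6) E E))) (T 0 (T 0 E (T 24 E E)) (T 0 (T (-18) E E) E))) (T 0 (T 0 (T 0 E (T (-6) E E)) (T 0 (T 6 E E) E)) E))),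
      ([GX, GX, GY, GY, GY],
       T 0 (T 0 E (T 0 E (T 0 E (T 0 E (T (-2) E E))))) (T 0 (T 0 E (T 0 E (T 0 E (T 8 E E)))) (T 0 (T 0 E (T 0 E (T (-12) E E))) (T 0 (T 0 E (T 8 E E)) (T 0 (T (-2) E E) E)))))])"

definition cert6 :: certificate where
  "cert6 =
    (12,
     [([GX, GX, GX, GX, GX, GY], [(12, [KX, KU, KX, KX, KX])]),
      ([GX, GX, GX, GY, GX, GY], [((-12), [KX, KU, KX, KU])]),
      ([GX, GX, GY, GX, GY, GY], [(12, [KW])])],
     [([GX, GX, GX, GX, GX, GY],
       T 0 (T 0 (T 0 (T 0 (T 0 E (T 0 E (T (-12) E E))) (T 0 E (T 0 (T 48 E E) E))) (T 0 (T 0 (T 0 E (T 72 E E)) (T 0 (T (-144) E E) E)) E)) (T 0 (T 0 (T 0 (T 0 E (T (-48) E E)) E) (T 0 (T 0 (T 144 E E) E) E)) (T 0 (T 0 (T 0 (T (-48) E E) E) E) E))) (T 0 (T 0 (T 0 (T 0 E (T 0 (T 48 E E) E)) (T 0 (T 0 (T (-72) E E) E) E)) E) (T 0 (T 0 (T 0 (T 0 (T 12 E E) E) E) E) E))),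
      ([GX, GX, GX, GX, GY, GY],
       T 0 (T 0 (T 0 (T 0 E (T 0 E (T 0 E (T (-6) E E)))) (T 0 E (T 0 (T 0 E (T (-6) E E)) (T 0 (T 24 E E) E)))) (T 0 (T 0 (T 0 E (T 0 E (T 60 E E))) (T 0 (T 0 E (T (-72) E E)) (T 0 (T (-48) E E) E))) (T 0 (T 0 (T 0 E (T 18 E E)) (T 0 (T 48 E E) E)) (T 0 (T 0 (T (-24) E E) E) E)))) (T 0 (T 0 (T 0 (T 0 E (T 0 E (T (-42) E E))) (T 0 (T 0 E (T 84 E E)) (T 0 (T (-18) E E) E))) (T 0 (T 0 (T 0 E (T (-84) E E)) (T 0 (T 72 E E) E)) (T 0 (T 0 (T 6 E E) E) E))) (T 0 (T 0 (T 0 (T 0 E (T 42 E E)) (T 0 (T (-60) E E) E)) E) (T 0 (T 0 (T 0 (T 6 E E) E) E) E)))),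
      ([GX, GX, GX, GY, GX, GY],
       T 0 (T 0 (T 0 E (T 0 E (T 0 (T 0 E (T (-12) E E)) (T 0 (T 12 E E) E)))) (T 0 (T 0 (T 0 E (T 0 E (T 12 E E))) (T 0 E (T 0 (T (-24) E E) E))) (T 0 (T 0 E (T 0 (T 24 E E) E)) (T 0 (T 0 (T (-12) E E) E) E)))) (T 0 (T 0 (T 0 (T 0 E (T 0 E (T (-12) E E))) (T 0 (T 0 E (T 24 E E)) E)) (T 0 (T 0 (T 0 E (T (-24) E E)) E) (T 0 (T 0 (T 12 E E) E) E))) (T 0 (T 0 (T 0 (T 0 E (T 12 E E)) (T 0 (T (-12) E E) E)) E) E))),
      ([GX, GX, GX, GY, GY, GY],
       T 0 (T 0 (T 0 E (T 0 E (T 0 E (T 0 E (T (-4) E E))))) (T 0 (T 0 E (T 0 E (T 0 E (T 10 E E)))) (T 0 (T 0 E (T 0 E (T (-6) E E))) (T 0 (T 0 E (T 4 E E)) E)))) (T 0 (T 0 (T 0 E (T 0 E (T 0 E (T 6 E E)))) (T 0 (T 0 E (T 0 E (T (-18) E E))) (T 0 E (T 0 (T (-4) E E) E)))) (T 0 (T 0 E (T 0 (T 0 E (T 18 E E)) (T 0 (T 6 E E) E))) (T 0 (T 0 (T 0 E (T (-6) E E)) (T 0 (T (-10) E E) E)) (T 0 (T 0 (T 4 E E) E) E))))),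
      ([GX, GX, GY, GY, GX, GY],
       T 0 (T 0 E (T 0 (T 0 E (T 0 E (T 0 E (T 6 E E)))) (T 0 (T 0 E (T 0 E (T (-18) E E))) (T 0 (T 0 E (T 12 E E)) E)))) (T 0 (T 0 (T 0 E (T 0 E (T 0 E (T (-6) E E)))) (T 0 (T 0 E (T 0 E (T 18 E E))) (T 0 E (T 0 (T (-12) E E) E)))) (T 0 (T 0 E (T 0 (T 0 E (T (-18) E E)) (T 0 (T 18 E E) E))) (T 0 (T 0 (T 0 E (T 6 E E)) (T 0 (T (-6) E E) E)) E)))),
      ([GX, GX, GY, GY, GY, GY],
       T 0 (T 0 E (T 0 E (T 0 E (T 0 E (T 0 E (T (-3) E E)))))) (T 0 (T 0 E (T 0 E (T 0 E (T 0 E (T 15 E E))))) (T 0 (T 0 E (T 0 E (T 0 E (T (-30) E E)))) (T 0 (T 0 E (T 0 E (T 30 E E))) (T 0 (T 0 E (T (-15) E E)) (T 0 (T 3 E E) E))))))])"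

definition cert7 :: certificate where
  "cert7 =
    (60,
     [([GX, GX, GX, GX, GX, GX, GY], [((-60), [KX, KU, KX, KX, KX, KX])]),
      ([GX, GX, GX, GX, GY, GX, GY], [((-180), [KX, KU, KX, KX, KU]), (240, [KX, KU, KX, KU, KX])]),
      ([GX, GX, GX, GY, GX, GX, GY], [((-60), [KX, KU, KX, KX, KU]), (60, [KX, KU, KX, KU, KX])]),
      ([GX, GX, GY, GX, GY, GX, GY], [((-60), [KX, KU, KU, KU])]),
      ([GX, GX, GX, GY, GX, GY, GY], [(240, [KX, KU, KU, KU]), (60, [KX, KW])])],
     [([GX, GX, GX, GX, GX, GX, GY],
       T 0 (T 0 (T 0 (T 0 (T 0 (T 0 E (T 0 E (T (-60) E E))) (T 0 E (T 0 (T 300 E E) E))) (T 0 E (T 0 (T 0 (T (-600) E E) E) E))) (T 0 (T 0 (T 0 (T 0 E (T 1200 E E)) (T 0 (T (-3600) E E) E)) (T 0 (T 0 (T 3600 E E) E) E)) (T 0 (T 0 (T 0 (T (-600) E E) E) E) E))) (T 0 (T 0 (T 0 (T 0 (T 0 E (T (-1800) E E)) (T 0 (T 4800 E E) E)) (T 0 (T 0 (T (-3600) E E) E) E)) E) (T 0 (T 0 (T 0 (T 0 (T 300 E E) E) E) E) E))) (T 0 (T 0 (T 0 (T 0 (T 0 (T 0 E (T 720 E E)) (T 0 (T (-1800) E E) E)) (T 0 (T 0 (T 1200 E E) E) E)) E) E) (T 0 (T 0 (T 0 (T 0 (T 0 (T (-60) E E) E) E) E) E) E))),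
      ([GX, GX, GX, GX, GX, GY, GY],
       T 0 (T 0 (T 0 (T 0 (T 0 E (T 0 E (T 0 E (T (-30) E E)))) (T 0 E (T 0 (T 0 E (T (-30) E E)) (T 0 (T 150 E E) E)))) (T 0 (T 0 (T 0 E (T 0 E (T 660 E E))) (T 0 E (T 0 (T (-1320) E E) E))) (T 0 (T 0 (T 0 E (T (-1350) E E)) (T 0 (T 2790 E E) E)) (T 0 (T 0 (T (-960) E E) E) E)))) (T 0 (T 0 (T 0 (T 0 E (T 0 E (T (-930) E E))) (T 0 (T 0 E (T (-2460) E E)) (T 0 (T 3930 E E) E))) (T 0 (T 0 (T 0 E (T 7860 E E)) (T 0 (T (-10800) E E) E)) (T 0 (T 0 (T 2790 E E) E) E))) (T 0 (T 0 (T 0 (T 0 E (T (-3030) E E)) (T 0 (T 3930 E E) E)) (T 0 (T 0 (T (-1320) E E) E) E)) (T 0 (T 0 (T 0 (T 150 E E) E) E) E)))) (T 0 (T 0 (T 0 (T 0 (T 0 E (T 0 E (T 360 E E))) (T 0 (T 0 E (T 2520 E E)) (T 0 (T (-3030) E E) E))) (T 0 (T 0 (T 0 E (T (-6480) E E)) (T 0 (T 7860 E E) E)) (T 0 (T 0 (T (-1350) E E) E) E))) (T 0 (T 0 (T 0 (T 0 E (T 2520 E E)) (T 0 (T (-2460) E E) E)) E) (T 0 (T 0 (T 0 (T (-30) E E) E) E) E))) (T 0 (T 0 (T 0 (T 0 (T 0 E (T 360 E E)) (T 0 (T (-930) E E) E)) (T 0 (T 0 (T 660 E E) E) E)) E)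 (T 0 (T 0 (T 0 (T 0 (T (-30) E E) E) E) E) E)))),
      ([GX, GX, GX, GX, GY, GX, GY],
       T 0 (T 0 (T 0 (T 0 E (T 0 E (T 0 (T 0 E (T (-60) E E)) (T 0 (T 60 E E) E)))) (T 0 (T 0 (T 0 E (T 0 E (T 240 E E))) (T 0 E (T 0 (T (-480) E E) E))) (T 0 (T 0 (T 0 E (T (-540) E E)) (T 0 (T 1260 E E) E)) (T 0 (T 0 (T (-480) E E) E) E)))) (T 0 (T 0 (T 0 (T 0 E (T 0 E (T (-420) E E))) (T 0 (T 0 E (T (-600) E E)) (T 0 (T 1380 E E) E))) (T 0 (T 0 (T 0 E (T 2760 E E)) (T 0 (T (-4320) E E) E)) (T 0 (T 0 (T 1260 E E) E) E))) (T 0 (T 0 (T 0 (T 0 E (T (-1020) E E)) (T 0 (T 1380 E E) E)) (T 0 (T 0 (T (-480) E E) E) E)) (T 0 (T 0 (T 0 (T 60 E E) E) E) E)))) (T 0 (T 0 (T 0 (T 0 (T 0 E (T 0 E (T 180 E E))) (T 0 (T 0 E (T 720 E E)) (T 0 (T (-1020) E E) E))) (T 0 (T 0 (T 0 E (T (-2160) E E)) (T 0 (T 2760 E E) E)) (T 0 (T 0 (T (-540) E E) E) E))) (T 0 (T 0 (T 0 (T 0 E (T 720 E E)) (T 0 (T (-600) E E) E)) E) (T 0 (T 0 (T 0 (T (-60) E E) E) E) E))) (T 0 (T 0 (T 0 (T 0 (T 0 E (T 180 E E)) (T 0 (T (-420) E E) E)) (T 0 (T 0 (T 240 E E) E) E))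 E) E))),
      ([GX, GX, GX, GY, GX, GX, GY],
       T 0 (T 0 (T 0 E (T 0 (T 0 (T 0 E (T 0 E (T 60 E E))) (T 0 E (T 0 (T (-120) E E) E))) (T 0 (T 0 (T 0 E (T (-180) E E)) (T 0 (T 360 E E) E)) (T 0 (T 0 (T (-120) E E) E) E)))) (T 0 (T 0 (T 0 (T 0 E (T 0 E (T (-120) E E))) (T 0 (T 0 E (T (-240) E E)) (T 0 (T 480 E E) E))) (T 0 (T 0 (T 0 E (T 960 E E)) (T 0 (T (-1440) E E) E)) (T 0 (T 0 (T 360 E E) E) E))) (T 0 (T 0 (T 0 (T 0 E (T (-360) E E)) (T 0 (T 480 E E) E)) (T 0 (T 0 (T (-120) E E) E) E)) E))) (T 0 (T 0 (T 0 (T 0 (T 0 E (T 0 E (T 60 E E))) (T 0 (T 0 E (T 240 E E)) (T 0 (T (-360) E E) E))) (T 0 (T 0 (T 0 E (T (-720) E E)) (T 0 (T 960 E E) E)) (T 0 (T 0 (T (-180) E E) E) E))) (T 0 (T 0 (T 0 (T 0 E (T 240 E E)) (T 0 (T (-240) E E) E)) E) E)) (T 0 (T 0 (T 0 (T 0 (T 0 E (T 60 E E)) (T 0 (T (-120) E E) E)) (T 0 (T 0 (T 60 E E) E) E)) E) E))),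
      ([GX, GX, GX, GX, GY, GY, GY],
       T 0 (T 0 (T 0 (T 0 E (T 0 E (T 0 E (T 0 E (T (-20) E E))))) (T 0 (T 0 E (T 0 E (T 0 E (T (-220) E E)))) (T 0 (T 0 E (T 0 E (T 640 E E))) (T 0 (T 0 E (T (-650) E E)) (T 0 (T 290 E E) E))))) (T 0 (T 0 (T 0 E (T 0 E (T 0 E (T 710 E E)))) (T 0 (T 0 E (T 0 E (T (-2210) E E))) (T 0 (T 0 E (T 3340 E E)) (T 0 (T (-2110) E E) E)))) (T 0 (T 0 (T 0 E (T 0 E (T 500 E E))) (T 0 (T 0 E (T (-3130) E E)) (T 0 (T 3060 E E) E))) (T 0 (T 0 (T 0 E (T 1600 E E)) (T 0 (T (-2110) E E) E)) (T 0 (T 0 (T 290 E E) E) E))))) (T 0 (T 0 (T 0 (T 0 E (T 0 E (T 0 E (T (-410) E E)))) (T 0 (T 0 E (T 0 E (T 1590 E E))) (T 0 (T 0 E (T (-2670) E E)) (T 0 (T 1600 E E) E)))) (T 0 (T 0 (T 0 E (T 0 E (T (-920) E E))) (T 0 (T 0 E (T 4000 E E)) (T 0 (T (-3130) E E) E))) (T 0 (T 0 (T 0 E (T (-2670) E E)) (T 0 (T 3340 E E) E)) (T 0 (T 0 (T (-650) E E) E) E)))) (T 0 (T 0 (T 0 (T 0 E (T 0 E (T 280 E E))) (T 0 (T 0 E (T (-920) E E)) (T 0 (T 500 E E) E))) (T 0 (T 0 (T 0 E (T 1590 E E)) (T 0 (T (-2210) E E) E)) (T 0 (T 0 (T 640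 E E) E) E))) (T 0 (T 0 (T 0 (T 0 E (T (-410) E E)) (T 0 (T 710 E E) E)) (T 0 (T 0 (T (-220) E E) E) E)) (T 0 (T 0 (T 0 (T (-20) E E) E) E) E))))),
      ([GX, GX, GX, GY, GX, GY, GY],
       T 0 (T 0 (T 0 E (T 0 (T 0 E (T 0 E (T 0 E (T (-120) E E)))) (T 0 (T 0 E (T 0 E (T 300 E E))) (T 0 (T 0 E (T (-300) E E)) (T 0 (T 120 E E) E))))) (T 0 (T 0 (T 0 E (T 0 E (T 0 E (T 300 E E)))) (T 0 (T 0 E (T 0 E (T (-1020) E E))) (T 0 (T 0 E (T 1800 E E)) (T 0 (T (-1140) E E) E)))) (T 0 (T 0 (T 0 E (T 0 E (T 300 E E))) (T 0 (T 0 E (T (-1980) E E)) (T 0 (T 1800 E E) E))) (T 0 (T 0 (T 0 E (T 960 E E)) (T 0 (T (-1140) E E) E)) (T 0 (T 0 (T 120 E E) E) E))))) (T 0 (T 0 (T 0 (T 0 E (T 0 E (T 0 E (T (-180) E E)))) (T 0 (T 0 E (T 0 E (T 780 E E))) (T 0 (T 0 E (T (-1500) E E)) (T 0 (T 960 E E) E)))) (T 0 (T 0 (T 0 E (T 0 E (T (-480) E E))) (T 0 (T 0 E (T 2400 E E)) (T 0 (T (-1980) E E) E))) (T 0 (T 0 (T 0 E (T (-1500) E E)) (T 0 (T 1800 E E) E)) (T 0 (T 0 (T (-300) E E) E) E)))) (T 0 (T 0 (T 0 (T 0 E (T 0 E (T 120 E E))) (T 0 (T 0 E (T (-480) E E))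 (T 0 (T 300 E E) E))) (T 0 (T 0 (T 0 E (T 780 E E)) (T 0 (T (-1020) E E) E)) (T 0 (T 0 (T 300 E E) E) E))) (T 0 (T 0 (T 0 (T 0 E (T (-180) E E)) (T 0 (T 300 E E) E)) (T 0 (T 0 (T (-120) E E) E) E)) E)))),
      ([GX, GX, GX, GY, GY, GX, GY],
       T 0 (T 0 (T 0 E (T 0 E (T 0 E (T 0 (T 0 E (T (-30) E E)) (T 0 (T 30 E E) E))))) (T 0 (T 0 (T 0 E (T 0 E (T 0 E (T 30 E E)))) (T 0 (T 0 E (T 0 E (T (-210) E E))) (T 0 (T 0 E (T 660 E E)) (T 0 (T (-510) E E) E)))) (T 0 (T 0 (T 0 E (T 0 E (T 120 E E))) (T 0 (T 0 E (T (-930) E E)) (T 0 (T 900 E E) E))) (T 0 (T 0 (T 0 E (T 420 E E)) (T 0 (T (-510) E E) E)) (T 0 (T 0 (T 30 E E) E) E))))) (T 0 (T 0 (T 0 (T 0 E (T 0 E (T 0 E (T (-30) E E)))) (T 0 (T 0 E (T 0 E (T 210 E E))) (T 0 (T 0 E (T (-570) E E)) (T 0 (T 420 E E) E)))) (T 0 (T 0 (T 0 E (T 0 E (T (-120) E E))) (T 0 (T 0 E (T 960 E E)) (T 0 (T (-930) E E) E))) (T 0 (T 0 (T 0 E (T (-570) E E)) (T 0 (T 660 E E) E)) (T 0 (T 0 (T (-30) E E) E) E)))) (T 0 (T 0 (T 0 E (T 0 (T 0 E (T (-120) E E)) (T 0 (T 120 E E) E))) (T 0 (T 0 (T 0 E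 (T 210 E E)) (T 0 (T (-210) E E) E)) E)) (T 0 (T 0 (T 0 (T 0 E (T (-30) E E)) (T 0 (T 30 E E) E)) E) E)))),
      ([GX, GX, GY, GX, GX, GY, GY],
       T 0 (T 0 (T 0 E (T 0 (T 0 E (T 0 E (T 0 E (T (-30) E E)))) (T 0 (T 0 E (T 0 E (T 90 E E))) (T 0 (T 0 E (T (-90) E E)) (T 0 (T 30 E E) E))))) (T 0 (T 0 (T 0 E (T 0 E (T 0 E (T 60 E E)))) (T 0 (T 0 E (T 0 E (T (-300) E E))) (T 0 (T 0 E (T 660 E E)) (T 0 (T (-420) E E) E)))) (T 0 (T 0 (T 0 E (T 0 E (T 120 E E))) (T 0 (T 0 E (T (-840) E E)) (T 0 (T 720 E E) E))) (T 0 (T 0 (T 0 E (T 390 E E)) (T 0 (T (-420) E E) E)) (T 0 (T 0 (T 30 E E) E) E))))) (T 0 (T 0 (T 0 (T 0 E (T 0 E (T 0 E (T (-30) E E)))) (T 0 (T 0 E (T 0 E (T 210 E E))) (T 0 (T 0 E (T (-570) E E)) (T 0 (T 390 E E) E)))) (T 0 (T 0 (T 0 E (T 0 E (T (-120) E E))) (T 0 (T 0 E (T 960 E E)) (T 0 (T (-840) E E) E))) (T 0 (T 0 (T 0 E (T (-570) E E)) (T 0 (T 660 E E) E)) (T 0 (T 0 (T (-90) E E) E) E)))) (T 0 (T 0 (T 0 E (T 0 (T 0 E (T (-120) E E)) (T 0 (T 120 E E) E))) (T 0 (T 0 (T 0 E (T 210 E E)) (T 0 (T (-300) E E) E)) (T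 0 (T 0 (T 90 E E) E) E))) (T 0 (T 0 (T 0 (T 0 E (T (-30) E E)) (T 0 (T 60 E E) E)) (T 0 (T 0 (T (-30) E E) E) E)) E)))),
      ([GX, GX, GX, GY, GY, GY, GY],
       T 0 (T 0 (T 0 E (T 0 E (T 0 E (T 0 E (T 0 E (T (-15) E E)))))) (T 0 (T 0 E (T 0 E (T 0 E (T 0 E (T (-280) E E))))) (T 0 (T 0 E (T 0 E (T 0 E (T 1105 E E)))) (T 0 (T 0 E (T 0 E (T (-1320) E E))) (T 0 (T 0 E (T 875 E E)) (T 0 (T (-350) E E) E)))))) (T 0 (T 0 (T 0 E (T 0 E (T 0 E (T 0 E (T 355 E E))))) (T 0 (T 0 E (T 0 E (T 0 E (T (-1090) E E)))) (T 0 (T 0 E (T 0 E (T 645 E E))) (T 0 (T 0 E (T (-860) E E)) (T 0 (T 875 E E) E))))) (T 0 (T 0 (T 0 E (T 0 E (T 0 E (T (-165) E E)))) (T 0 (T 0 E (T 0 E (T 990 E E))) (T 0 (T 0 E (T 645 E E)) (T 0 (T (-1320) E E) E)))) (T 0 (T 0 (T 0 E (T 0 E (T (-165) E E))) (T 0 (T 0 E (T (-1090) E E)) (T 0 (T 1105 E E) E))) (T 0 (T 0 (T 0 E (T 355 E E)) (T 0 (T (-280) E E) E)) (T 0 (T 0 (T (-15) E E) E) E)))))),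
      ([GX, GX, GY, GX, GY, GX, GY],
       T 0 (T 0 E (T 0 (T 0 E (T 0 (T 0 E (T 0 E (T (-60) E E))) (T 0 (T 0 E (T 240 E E)) (T 0 (T (-180) E E) E)))) (T 0 (T 0 (T 0 E (T 0 E (T 60 E E))) (T 0 (T 0 E (T (-420) E E)) (T 0 (T 360 E E) E))) (T 0 (T 0 (T 0 E (T 180 E E)) (T 0 (T (-180) E E) E)) E)))) (T 0 (T 0 (T 0 E (T 0 (T 0 E (T 0 E (T 60 E E))) (T 0 (T 0 E (T (-240) E E)) (T 0 (T 180 E E) E)))) (T 0 (T 0 (T 0 E (T 0 E (T (-60) E E))) (T 0 (T 0 E (T 480 E E)) (T 0 (T (-420) E E) E))) (T 0 (T 0 (T 0 E (T (-240) E E)) (T 0 (T 240 E E) E)) E))) (T 0 (T 0 (T 0 E (T 0 (T 0 E (T (-60) E E)) (T 0 (T 60 E E) E))) (T 0 (T 0 (T 0 E (T 60 E E)) (T 0 (T (-60) E E) E)) E)) E))),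
      ([GX, GX, GY, GX, GY, GY, GY],
       T 0 (T 0 E (T 0 (T 0 E (T 0 E (T 0 E (T 0 E (T (-140) E E))))) (T 0 (T 0 E (T 0 E (T 0 E (T 500 E E)))) (T 0 (T 0 E (T 0 E (T (-600) E E))) (T 0 (T 0 E (T 400 E E)) (T 0 (T (-160) E E) E)))))) (T 0 (T 0 (T 0 E (T 0 E (T 0 E (T 0 E (T 140 E E))))) (T 0 (T 0 E (T 0 E (T 0 E (T (-440) E E)))) (T 0 (T 0 E (T 0 E (T 300 E E))) (T 0 (T 0 E (T (-400) E E)) (T 0 (T 400 E E) E))))) (T 0 (T 0 (T 0 E (T 0 E (T 0 E (T (-60) E E)))) (T 0 (T 0 E (T 0 E (T 360 E E))) (T 0 (T 0 E (T 300 E E)) (T 0 (T (-600) E E) E)))) (T 0 (T 0 (T 0 E (T 0 E (T (-60) E E))) (T 0 (T 0 E (T (-440) E E)) (T 0 (T 500 E E) E))) (T 0 (T 0 (T 0 E (T 140 E E)) (T 0 (T (-140) E E) E)) E))))),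
      ([GX, GX, GY, GY, GY, GX, GY],
       T 0 (T 0 E (T 0 (T 0 E (T 0 E (T 0 E (T 0 E (T 20 E E))))) (T 0 (T 0 E (T 0 E (T 0 E (T (-80) E E)))) (T 0 (T 0 E (T 0 E (T 120 E E))) (T 0 (T 0 E (T (-100) E E)) (T 0 (T 40 E E) E)))))) (T 0 (T 0 (T 0 E (T 0 E (T 0 E (T 0 E (T (-20) E E))))) (T 0 (T 0 E (T 0 E (T 0 E (T 80 E E)))) (T 0 (T 0 E (T 0 E (T (-120) E E))) (T 0 (T 0 E (T 160 E E)) (T 0 (T (-100) E E) E))))) (T 0 (T 0 E (T 0 E (T 0 (T 0 E (T (-120) E E)) (T 0 (T 120 E E) E)))) (T 0 (T 0 E (T 0 (T 0 E (T 80 E E)) (T 0 (T (-80) E E) E))) (T 0 (T 0 (T 0 E (T (-20) E E)) (T 0 (T 20 E E) E)) E))))),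
      ([GX, GX, GY, GY, GY, GY, GY],
       T 0 (T 0 E (T 0 E (T 0 E (T 0 E (T 0 E (T 0 E (T (-12) E E))))))) (T 0 (T 0 E (T 0 E (T 0 E (T 0 E (T 0 E (T 72 E E)))))) (T 0 (T 0 E (T 0 E (T 0 E (T 0 E (T (-180) E E))))) (T 0 (T 0 E (T 0 E (T 0 E (T 240 E E)))) (T 0 (T 0 E (T 0 E (T (-180) E E))) (T 0 (T 0 E (T 72 E E)) (T 0 (T (-12) E E) E)))))))])"

lemma cert_valid_up_to_7:
  assumes "n \<in> {1..7}"
  obtains C where "cert_valid n C"
proof -
  have "cert_valid 1 cert1" "cert_valid 2 cert2" "cert_valid 3 cert3" "cert_valid 4 cert4"
    "cert_valid 5 cert5" "cert_valid 6 cert6" "cert_valid 7 cert7"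
    by code_simp+
  moreover have "n \<in> {1, 2, 3, 4, 5, 6, 7}"
    using assms by auto
  ultimately show ?thesis
    using that by blast
qed

theorem theorem5p8:
  fixes p :: "'k::field_char_0 ncpoly"
  assumes "p \<in> free_lie"
    and "delta p = (\<lambda>w. 0)"
    and "deg_le 7 p"
  shows "p \<in> lie_gen
           {nc_gen GX,
            nc_bracket (nc_gen GY) (nc_gen GX),
            nc_bracket (nc_bracket (nc_bracket (nc_gen GY) (nc_gen GX)) (nc_gen GY))
                       (nc_bracket (nc_bracket (nc_gen GY) (nc_gen GX)) (nc_gen GX))}"
proof -
  have "homogeneous_part n p \<in> lie_gen kernel_gens" if n: "n \<in> {1..7}" for n
  proof -
    obtain C where "cert_valid n C"
      by (rule cert_valid_up_to_7[OF n])
    moreover have "homogeneous_part n p \<in> nc_span (left_bracket ` set (xy_words n))"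
      using n by (intro bracket_span_xy_words homogeneous_part_free_lie assms(1)) auto
    moreover have "delta (homogeneous_part n p) = (\<lambda>w. 0)"
      unfolding delta_homogeneous_part assms(2) by (simp add: homogeneous_part_def)
    ultimately show ?thesis
      by (rule cert_valid_sound)
  qed
  then have "(\<lambda>w. \<Sum>n\<in>{1..7}. homogeneous_part n p w) \<in> lie_gen kernel_gens"
    by (intro lie_gen_nc_span nc_span_sum) (auto intro: nc_span.base simp: kernel_gens_def)
  then show ?thesis
    using sum_homogeneous_parts[OF free_lie_Nil[OF assms(1)] assms(3)]
    by (simp add: kernel_gens_def)
qed

end
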